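(* Let $P_n(x)$ be a real polynomial all of whose roots are real, with distinct roots $p_1<\dots<p_m$ of multiplicities $r_1,\dots,r_m$. Put $t_k=\sum_{l=1}^m r_lp_l^k$, $H_m=[t_{i+j-2}]_{i,j=1}^m$, and $\mathbf p_i=[1,p_i,\dots,p_i^{m-1}]$ (row vector). Then for all $i,j\in\{1,\dots,m\}$, $$r_j^{-1}-r_i^{-1}=(\mathbf p_j+\mathbf p_i)\,H_m^{-1}\,(\mathbf p_j-\mathbf p_i)^T.$$ *)

theory Defs
  imports "HOL-Computational_Algebra.Polynomial" "Jordan_Normal_Form.Gauss_Jordan_Elimination"
begin

definition root_list :: "real poly \<Rightarrow> real list" where
  "root_list P = sorted_list_of_set {x. poly P x = 0}"

definition power_sum :: "real poly \<Rightarrow> nat \<Rightarrow> real" where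
  "power_sum P k = (\<Sum>x\<in>{x. poly P x = 0}. real (order x P) * x ^ k)"

(* Hankel matrix H_m = [t_{i+j-2}]_{i,j=1..m}, here 0-indexed: entry (i,j) = t_{i+j} *)
definition hankel_mat :: "real poly \<Rightarrow> real mat" where
  "hankel_mat P = (let m = length (root_list P) in mat m m (\<lambda>(i,j). power_sum P (i + j)))"

definition pow_vec :: "nat \<Rightarrow> real \<Rightarrow> real vec" where
  "pow_vec m x = vec m (\<lambda>k. x ^ k)"

end

theory Submission
  imports Defs "Jordan_Normal_Form.Determinant"
begin

text \<open>Since \<open>t\<^sub>i\<^sub>+\<^sub>j = \<Sum>\<^sub>l r\<^sub>l p\<^sub>l\<^sup>i p\<^sub>l\<^sup>j\<close>, the Hankel matrix factors as \<open>H = V\<^sup>T D V\<close>, where \<open>V\<close> is the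
  Vandermonde matrix of the distinct roots (its rows are the vectors \<open>\<^bold>p\<^sub>l\<close>) and
  \<open>D = diag(r\<^sub>1, \<dots>, r\<^sub>m)\<close>. As the roots are distinct, \<open>V\<close> is invertible, hence so is \<open>H\<close>, and
  \<open>V H\<inverse> V\<^sup>T = D\<inverse>\<close>, i.e. \<open>\<^bold>p\<^sub>a H\<inverse> \<^bold>p\<^sub>b\<^sup>T = \<delta>\<^sub>a\<^sub>b / r\<^sub>a\<close>. Expanding the bilinear form
  \<open>(\<^bold>p\<^sub>j + \<^bold>p\<^sub>i) H\<inverse> (\<^bold>p\<^sub>j - \<^bold>p\<^sub>i)\<^sup>T\<close> gives the identity.\<close>

definition vandermonde_mat :: "'a :: comm_ring_1 list \<Rightarrow> 'a mat" where
  "vandermonde_mat xs = mat (length xs) (length xs) (\<lambda>(l, k). xs ! l ^ k)"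

lemma vandermonde_mat_carrier [simp]:
  "vandermonde_mat xs \<in> carrier_mat (length xs) (length xs)"
  by (simp add: vandermonde_mat_def)

lemma det_vandermonde_mat_nonzero:
  fixes xs :: "'a :: field list"
  assumes "distinct xs"
  shows "det (vandermonde_mat xs) \<noteq> 0"
proof
  let ?n = "length xs"
  assume "det (vandermonde_mat xs) = 0"
  then obtain v where v: "v \<in> carrier_vec ?n" "v \<noteq> 0\<^sub>v ?n" "vandermonde_mat xs *\<^sub>v v = 0\<^sub>v ?n"
    using det_0_iff_vec_prod_zero_field[OF vandermonde_mat_carrier] by auto
  have "?n > 0"
    using v(1,2) by auto
  define q where "q = (\<Sum>k<?n. monom (v $ k) k)"
  have "poly q (xs ! l) = (vandermonde_mat xs *\<^sub>v v) $ l" if "l < ?n" for l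
    using that v(1)
    by (auto simp: q_def poly_sum poly_monom vandermonde_mat_def scalar_prod_def mult.commute
        intro!: sum.cong)
  then have "poly q x = poly 0 x" if "x \<in> set xs" for x
    using that v(3) by (auto simp: in_set_conv_nth)
  moreover have "degree q < card (set xs)"
    unfolding q_def distinct_card[OF assms]
    using \<open>?n > 0\<close> by (intro degree_sum_less) (auto intro: le_less_trans[OF degree_monom_le])
  ultimately have "q = 0"
    by (intro poly_eqI_degree[of "set xs"]) auto
  have "coeff q k = v $ k" if "k < ?n" for k
    using that by (simp add: q_def coeff_sum)
  then have "v = 0\<^sub>v ?n"
    using v(1) \<open>q = 0\<close> by (intro eq_vecI) auto
  with v(2) show False ..
qed

lemma mat_inverse_eq_right_inverse:
  fixes A :: "'a :: field mat"
  assumes A: "A \<in> carrier_mat n n" and X: "X \<in> carrier_mat n n" and AX: "A * X = 1\<^sub>m n"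
  shows "invertible_mat A" and "mat_inverse A = Some X"
proof -
  have XA: "X * A = 1\<^sub>m n"
    by (rule mat_mult_left_right_inverse[OF A X AX])
  then show "invertible_mat A"
    using A X AX by (auto simp: invertible_mat_def inverts_mat_def)
  have "det A \<noteq> 0"
    using arg_cong[OF AX, of det] det_mult[OF A X] by auto
  then obtain B where B: "mat_inverse A = Some B"
    using mat_inverse(1)[OF A] det_non_zero_imp_unit[OF A] by fastforce
  with mat_inverse(2)[OF A] have BA: "B * A = 1\<^sub>m n" and B': "B \<in> carrier_mat n n"
    by auto
  have "B = B * (A * X)"
    using AX B' by simp
  also have "\<dots> = (B * A) * X"
    using assoc_mult_mat[OF B' A X] by simp
  also have "\<dots> = X"
    using BA X by simp
  finally show "mat_inverse A = Some X"
    using B by simp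
qed

lemma congruent_diag_mat_inverse:
  fixes V :: "'a :: field mat"
  assumes V: "V \<in> carrier_mat n n" and "det V \<noteq> 0" and d: "\<And>i. i < n \<Longrightarrow> d i \<noteq> 0"
  defines "H \<equiv> transpose_mat V * mat_diag n d * V"
  shows "invertible_mat H" and "the (mat_inverse H) \<in> carrier_mat n n"
    and "V * the (mat_inverse H) * transpose_mat V = mat_diag n (\<lambda>i. inverse (d i))"
proof -
  obtain W where W: "W \<in> carrier_mat n n" and WV: "W * V = 1\<^sub>m n" and VW: "V * W = 1\<^sub>m n"
    using det_non_zero_imp_unit[OF V \<open>det V \<noteq> 0\<close>, of undefined]
    by (auto simp: Units_def ring_mat_def)
  let ?D = "mat_diag n d" and ?Di = "mat_diag n (\<lambda>i. inverse (d i))"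
  have "?D * ?Di = mat_diag n (\<lambda>i. d i * inverse (d i))"
    by simp
  also have "\<dots> = mat_diag n (\<lambda>_. 1)"
    using d by (intro eq_matI) (auto simp: mat_diag_def)
  finally have D_Di: "?D * ?Di = 1\<^sub>m n"
    by simp
  have cancel_VW: "V * (W * Y) = Y" if "Y \<in> carrier_mat n k" for Y k
    using assoc_mult_mat[OF V W that] VW that by simp
  have cancel_D: "?D * (?Di * Y) = Y" if "Y \<in> carrier_mat n k" for Y k
    by (metis assoc_mult_mat[OF mat_diag_dim mat_diag_dim that] D_Di left_mult_one_mat that)
  have Vt_Wt: "transpose_mat V * transpose_mat W = 1\<^sub>m n"
    using transpose_mult[OF W V] WV by simp
  have Wt_Vt: "transpose_mat W * transpose_mat V = 1\<^sub>m n"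
    using transpose_mult[OF V W] VW by simp
  note assoc = assoc_mult_mat[of _ n n _ n _ n] mult_carrier_mat[of _ n n _ n]
  define X where "X = W * ?Di * transpose_mat W"
  have X: "X \<in> carrier_mat n n"
    unfolding X_def using W by (intro mult_carrier_mat) auto
  have H: "H \<in> carrier_mat n n"
    unfolding H_def using V by (intro mult_carrier_mat) auto
  have VX: "V * X = ?Di * transpose_mat W"
    using V W by (simp add: X_def assoc cancel_VW[of _ n])
  have HX: "H * X = 1\<^sub>m n"
    using V W X by (simp add: H_def assoc VX cancel_D[of _ n] Vt_Wt)
  show "invertible_mat H"
    by (rule mat_inverse_eq_right_inverse(1)[OF H X HX])
  show "the (mat_inverse H) \<in> carrier_mat n n"
    using mat_inverse_eq_right_inverse(2)[OF H X HX] X by simp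
  have "V * X * transpose_mat V = ?Di"
    using V W X by (simp add: VX assoc Wt_Vt right_mult_one_mat[OF mat_diag_dim])
  then show "V * the (mat_inverse H) * transpose_mat V = ?Di"
    using mat_inverse_eq_right_inverse(2)[OF H X HX] by simp
qed

lemma scalar_prod_add_mult_diff:
  fixes X :: "'a :: comm_ring_1 mat"
  assumes X: "X \<in> carrier_mat n n" and a: "a \<in> carrier_vec n" and b: "b \<in> carrier_vec n"
  shows "(a + b) \<bullet> (X *\<^sub>v (a - b)) =
    a \<bullet> (X *\<^sub>v a) - a \<bullet> (X *\<^sub>v b) + (b \<bullet> (X *\<^sub>v a) - b \<bullet> (X *\<^sub>v b))"
  using X a b
  by (simp add: mult_minus_distrib_mat_vec[OF X] add_scalar_prod_distrib[of _ n]
      scalar_prod_minus_distrib[of _ n])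

lemma index_mult_mat_transpose:
  assumes "A \<in> carrier_mat n n" "B \<in> carrier_mat n n" "C \<in> carrier_mat n n" "a < n" "b < n"
  shows "(A * B * transpose_mat C) $$ (a, b) = row A a \<bullet> (B *\<^sub>v row C b)"
  using assms by force

lemma row_vandermonde_mat:
  "l < length xs \<Longrightarrow> row (vandermonde_mat xs) l = pow_vec (length xs) (xs ! l)"
  by (auto simp: vandermonde_mat_def pow_vec_def)

lemma set_root_list: "P \<noteq> 0 \<Longrightarrow> set (root_list P) = {x. poly P x = 0}"
  by (simp add: root_list_def poly_roots_finite)

lemma distinct_root_list: "distinct (root_list P)"
  by (simp add: root_list_def)

lemma order_root_list_pos:
  assumes "P \<noteq> 0" "l < length (root_list P)"
  shows "order (root_list P ! l) P > 0"
  using assms nth_mem[OF assms(2)] set_root_list[OF assms(1)] by (auto simp: order_root)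

lemma power_sum_root_list:
  assumes "P \<noteq> 0"
  shows "power_sum P k =
    (\<Sum>l<length (root_list P). real (order (root_list P ! l) P) * root_list P ! l ^ k)"
  unfolding power_sum_def set_root_list[OF assms, symmetric]
  by (rule sum.reindex_bij_betw[OF bij_betw_nth[OF distinct_root_list refl refl], symmetric])

lemma hankel_mat_eq_congruent_diag:
  assumes "P \<noteq> 0"
  defines "p \<equiv> root_list P"
  shows "hankel_mat P = transpose_mat (vandermonde_mat p) *
    mat_diag (length p) (\<lambda>l. real (order (p ! l) P)) * vandermonde_mat p"
  by (rule eq_matI)
    (auto simp: hankel_mat_def Let_def p_def[symmetric] power_sum_root_list[OF assms(1)]
      mat_diag_mult_right[of _ "length p"] vandermonde_mat_def scalar_prod_def atLeast0LessThan
      power_add mult_ac intro!: sum.cong)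

lemma hankel_mat_inverse_pow_vec:
  assumes "P \<noteq> 0"
  defines "p \<equiv> root_list P" and "m \<equiv> length (root_list P)"
  shows "invertible_mat (hankel_mat P)"
    and "the (mat_inverse (hankel_mat P)) \<in> carrier_mat m m"
    and "\<lbrakk>a < m; b < m\<rbrakk> \<Longrightarrow>
      pow_vec m (p ! a) \<bullet> (the (mat_inverse (hankel_mat P)) *\<^sub>v pow_vec m (p ! b)) =
      (if a = b then 1 / real (order (p ! a) P) else 0)"
proof -
  let ?V = "vandermonde_mat p"
  have V: "?V \<in> carrier_mat m m"
    by (simp add: m_def p_def)
  have "det ?V \<noteq> 0"
    unfolding p_def by (rule det_vandermonde_mat_nonzero[OF distinct_root_list])
  moreover have "real (order (p ! l) P) \<noteq> 0" if "l < m" for l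
    using order_root_list_pos[OF assms(1)] that by (simp add: p_def m_def)
  ultimately have inverse: "invertible_mat (hankel_mat P)"
    "the (mat_inverse (hankel_mat P)) \<in> carrier_mat m m"
    "?V * the (mat_inverse (hankel_mat P)) * transpose_mat ?V =
      mat_diag m (\<lambda>l. inverse (real (order (p ! l) P)))"
    using congruent_diag_mat_inverse[OF V] hankel_mat_eq_congruent_diag[OF assms(1)]
    by (simp_all add: p_def m_def)
  show "invertible_mat (hankel_mat P)" "the (mat_inverse (hankel_mat P)) \<in> carrier_mat m m"
    by (fact inverse(1,2))+
  assume ab: "a < m" "b < m"
  then show "pow_vec m (p ! a) \<bullet> (the (mat_inverse (hankel_mat P)) *\<^sub>v pow_vec m (p ! b)) =
      (if a = b then 1 / real (order (p ! a) P) else 0)"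
    using index_mult_mat_transpose[OF V inverse(2) V ab, symmetric] inverse(3)
    by (simp add: row_vandermonde_mat m_def p_def mat_diag_def inverse_eq_divide)
qed

theorem corollary1:
  fixes P :: "real poly"
  assumes "P \<noteq> 0"
    and "\<forall>z::complex. poly (map_poly complex_of_real P) z = 0 \<longrightarrow> z \<in> \<real>"
    and "i < length (root_list P)" and "j < length (root_list P)"
  shows "invertible_mat (hankel_mat P) \<and>
    (let m = length (root_list P); p = root_list P; Hinv = the (mat_inverse (hankel_mat P)) in
      1 / real (order (p ! j) P) - 1 / real (order (p ! i) P) =
      (pow_vec m (p ! j) + pow_vec m (p ! i)) \<bullet> (Hinv *\<^sub>v (pow_vec m (p ! j) - pow_vec m (p ! i))))"
proof -
  define m where "m = length (root_list P)"
  define p where "p = root_list P"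
  define Hinv where "Hinv = the (mat_inverse (hankel_mat P))"
  have Hinv: "Hinv \<in> carrier_mat m m"
    using hankel_mat_inverse_pow_vec(2)[OF assms(1)] by (simp add: Hinv_def m_def)
  have "(pow_vec m (p ! j) + pow_vec m (p ! i)) \<bullet> (Hinv *\<^sub>v (pow_vec m (p ! j) - pow_vec m (p ! i))) =
      1 / real (order (p ! j) P) - 1 / real (order (p ! i) P)"
    using hankel_mat_inverse_pow_vec(3)[OF assms(1), folded m_def p_def Hinv_def] assms(3,4)
    by (simp add: scalar_prod_add_mult_diff[OF Hinv] pow_vec_def m_def p_def)
  then show ?thesis
    using hankel_mat_inverse_pow_vec(1)[OF assms(1)] by (simp add: Let_def m_def p_def Hinv_def)
qed

end
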